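(* For every prime $p$, as $v\to\infty$, $g_p'(v)\ge(1+o(1))v^2/49$; consequently, as $t\to\infty$, $g_p(t)\le(7+o(1))\sqrt{t}$.
   Context: For a prime $p$, the addition table of $\mathbb{Z}_p^m$ is the set of triples (faces) $(a,b,a+b)$, $a,b\in\mathbb{Z}_p^m$, viewed as a tripartite 3-uniform hypergraph whose vertices are rows, columns and labels (three disjoint copies of $\mathbb{Z}_p^m$). A set of vertices spans a face if all three vertices of the face are in the set. $g_p'(v)$ is the maximal number of faces that can be spanned by a set of $v$ vertices in the addition table of $\mathbb{Z}_p^m$, for any $m$ sufficiently large in terms of $v$ and $p$. An $(r,s)$-configuration is a collection of $s$ faces involving at most $r$ vertices in total. $g_p(t)$ is the least integer $r$ such that the addition table of $\mathbb{Z}_p^m$ contains an $(r,t)$-configuration for all $m$ sufficiently large in terms of $t$ and $p$. *)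

theory Defs
  imports Complex_Main "HOL-Computational_Algebra.Primes"
begin

definition zpm :: "nat \<Rightarrow> nat \<Rightarrow> (nat \<Rightarrow> nat) set" where
  "zpm p m = {x. (\<forall>i<m. x i < p) \<and> (\<forall>i\<ge>m. x i = 0)}"

definition vadd :: "nat \<Rightarrow> (nat \<Rightarrow> nat) \<Rightarrow> (nat \<Rightarrow> nat) \<Rightarrow> (nat \<Rightarrow> nat)" where
  "vadd p x y = (\<lambda>i. (x i + y i) mod p)"

text \<open>Vertices of the addition table: three disjoint copies (rows, columns, labels).\<close>
datatype 'a vtx = Row 'a | Col 'a | Lab 'a

definition verts :: "nat \<Rightarrow> nat \<Rightarrow> (nat \<Rightarrow> nat) vtx set" where
  "verts p m = Row ` zpm p m \<union> Col ` zpm p m \<union> Lab ` zpm p m"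

definition face :: "nat \<Rightarrow> (nat \<Rightarrow> nat) \<Rightarrow> (nat \<Rightarrow> nat) \<Rightarrow> (nat \<Rightarrow> nat) vtx set" where
  "face p a b = {Row a, Col b, Lab (vadd p a b)}"

definition faces :: "nat \<Rightarrow> nat \<Rightarrow> (nat \<Rightarrow> nat) vtx set set" where
  "faces p m = {face p a b | a b. a \<in> zpm p m \<and> b \<in> zpm p m}"

definition spanned :: "nat \<Rightarrow> nat \<Rightarrow> (nat \<Rightarrow> nat) vtx set \<Rightarrow> nat" where
  "spanned p m S = card {f \<in> faces p m. f \<subseteq> S}"

definition maxspan :: "nat \<Rightarrow> nat \<Rightarrow> nat \<Rightarrow> nat" where
  "maxspan p m v = Max {spanned p m S | S. S \<subseteq> verts p m \<and> card S = v}"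

definition gp' :: "nat \<Rightarrow> nat \<Rightarrow> nat" where
  "gp' p v = (THE c. \<forall>\<^sub>F m in sequentially. maxspan p m v = c)"

definition has_config :: "nat \<Rightarrow> nat \<Rightarrow> nat \<Rightarrow> nat \<Rightarrow> bool" where
  "has_config p m r s = (\<exists>F. F \<subseteq> faces p m \<and> card F = s \<and> card (\<Union>F) \<le> r)"

definition gp :: "nat \<Rightarrow> nat \<Rightarrow> nat" where
  "gp p t = (LEAST r. \<forall>\<^sub>F m in sequentially. has_config p m r t)"

end

theory Submission
  imports Defs "HOL-Library.FuncSet" "HOL-Real_Asymp.Real_Asymp"
begin

text \<open>Take \<open>v \<approx> 7 a p\<^sup>k\<close> with \<open>1 \<le> a < p\<close>, and let \<open>R\<close> be the set of vectors whose first
  \<open>k\<close> coordinates are arbitrary and whose \<open>k\<close>-th coordinate is below \<open>a\<close>. All sums of two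
  elements of \<open>R\<close> lie in a set \<open>L\<close> of size at most \<open>(2a - 1) p\<^sup>k\<close>, so the \<open>2|R| + |L| \<le> v\<close>
  vertices \<open>R \<union> R \<union> L\<close> span all \<open>|R|\<^sup>2 = (a p\<^sup>k)\<^sup>2 \<ge> v\<^sup>2/49\<close> faces \<open>(r, s, r + s)\<close>.
  For fixed \<open>v\<close> the maximal number of spanned faces is nondecreasing in \<open>m\<close> and at most
  \<open>v\<^sup>2\<close>, hence eventually constant, which makes \<open>g\<^sub>p'(v)\<close> well defined; the bound on
  \<open>g\<^sub>p(t)\<close> follows by taking \<open>v = \<lceil>7 \<surd>t\<rceil>\<close>.\<close>

definition box :: "nat \<Rightarrow> (nat \<Rightarrow> nat set) \<Rightarrow> (nat \<Rightarrow> nat) set" where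
  "box n B = {x. (\<forall>i<n. x i \<in> B i) \<and> (\<forall>i\<ge>n. x i = 0)}"

lemma bij_betw_box_PiE: "bij_betw (\<lambda>x. restrict x {..<n}) (box n B) (PiE {..<n} B)"
proof (rule bij_betw_byWitness[where f' = "\<lambda>f i. if i < n then f i else 0"])
  show "\<forall>x\<in>box n B. (\<lambda>i. if i < n then restrict x {..<n} i else 0) = x"
    by (auto simp: box_def fun_eq_iff)
  show "\<forall>f\<in>PiE {..<n} B. restrict (\<lambda>i. if i < n then f i else 0) {..<n} = f"
    by (auto simp: PiE_def extensional_def fun_eq_iff)
  show "(\<lambda>x. restrict x {..<n}) ` box n B \<subseteq> PiE {..<n} B"
    unfolding box_def by (rule image_subsetI, rule PiE_I) auto
  show "(\<lambda>f i. if i < n then f i else 0) ` PiE {..<n} B \<subseteq> box n B"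
    by (auto simp: box_def PiE_def Pi_def)
qed

lemma card_box: "card (box n B) = (\<Prod>i<n. card (B i))"
  using bij_betw_same_card[OF bij_betw_box_PiE] card_PiE[of "{..<n}" B] by simp

lemma finite_box: "(\<And>i. i < n \<Longrightarrow> finite (B i)) \<Longrightarrow> finite (box n B)"
  using bij_betw_finite[OF bij_betw_box_PiE] finite_PiE[of "{..<n}" B] by simp

lemma box_subset_zpm:
  assumes "n \<le> m" "p > 0" "\<And>i. i < n \<Longrightarrow> B i \<subseteq> {..<p}"
  shows "box n B \<subseteq> zpm p m"
proof
  fix x
  assume x: "x \<in> box n B"
  have "x i < p" for i
  proof (cases "i < n")
    case True
    then have "x i \<in> B i"
      using x by (simp add: box_def)
    then show ?thesis
      using assms(3)[OF True] by blast
  next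
    case False
    then show ?thesis
      using x assms(2) by (simp add: box_def)
  qed
  moreover have "x i = 0" if "i \<ge> m" for i
    using x that assms(1) by (simp add: box_def)
  ultimately show "x \<in> zpm p m"
    by (simp add: zpm_def)
qed

lemma vadd_in_box:
  assumes "x \<in> box n B" "y \<in> box n B"
    and "\<And>i b b'. i < n \<Longrightarrow> b \<in> B i \<Longrightarrow> b' \<in> B i \<Longrightarrow> (b + b') mod p \<in> C i"
  shows "vadd p x y \<in> box n C"
  using assms by (auto simp: box_def vadd_def)

lemma zpm_eq_box: "zpm p m = box m (\<lambda>_. {..<p})"
  by (auto simp: zpm_def box_def)

lemma finite_zpm: "finite (zpm p m)"
  by (simp add: zpm_eq_box finite_box)

lemma card_zpm: "card (zpm p m) = p ^ m"
  by (simp add: zpm_eq_box card_box)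

lemma zpm_mono: "p > 0 \<Longrightarrow> zpm p m \<subseteq> zpm p (Suc m)"
  by (auto simp: zpm_def less_Suc_eq)

lemma finite_verts: "finite (verts p m)"
  by (simp add: verts_def finite_zpm)

lemma verts_mono: "p > 0 \<Longrightarrow> verts p m \<subseteq> verts p (Suc m)"
  using zpm_mono[of p m] unfolding verts_def by blast

lemma card_verts_ge: "p ^ m \<le> card (verts p m)"
proof -
  have "card (Row ` zpm p m) = p ^ m"
    by (simp add: card_image card_zpm inj_on_def)
  moreover have "Row ` zpm p m \<subseteq> verts p m"
    by (auto simp: verts_def)
  ultimately show ?thesis
    using card_mono[OF finite_verts] by metis
qed

lemma finite_faces: "finite (faces p m)"
proof -
  have "faces p m = (\<lambda>(a, b). face p a b) ` (zpm p m \<times> zpm p m)"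
    by (auto simp: faces_def)
  then show ?thesis
    by (simp add: finite_zpm)
qed

lemma faces_mono: "p > 0 \<Longrightarrow> faces p m \<subseteq> faces p (Suc m)"
  using zpm_mono[of p m] by (auto simp: faces_def)

lemma spanned_mono: "S \<subseteq> T \<Longrightarrow> spanned p m S \<le> spanned p m T"
  unfolding spanned_def by (rule card_mono) (auto simp: finite_faces)

lemma spanned_mono_dim: "p > 0 \<Longrightarrow> spanned p m S \<le> spanned p (Suc m) S"
  unfolding spanned_def using faces_mono by (intro card_mono) (auto simp: finite_faces)

text \<open>A face is determined by its row and column.\<close>

lemma spanned_le_square:
  assumes "finite S"
  shows "spanned p m S \<le> card S ^ 2"
proof -
  let ?A = "Row -` S" and ?B = "Col -` S"
  have fin: "finite ?A" "finite ?B"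
    using assms by (auto intro: finite_vimageI simp: inj_def)
  have "card ?A \<le> card S"
    by (rule card_inj_on_le[where f=Row, OF _ _ assms]) (auto simp: inj_on_def)
  moreover have "card ?B \<le> card S"
    by (rule card_inj_on_le[where f=Col, OF _ _ assms]) (auto simp: inj_on_def)
  ultimately have card_AB: "card (?A \<times> ?B) \<le> card S ^ 2"
    by (simp add: card_cartesian_product power2_eq_square mult_le_mono)
  have "{f \<in> faces p m. f \<subseteq> S} \<subseteq> (\<lambda>(a, b). face p a b) ` (?A \<times> ?B)"
    by (auto simp: faces_def face_def)
  then have "spanned p m S \<le> card ((\<lambda>(a, b). face p a b) ` (?A \<times> ?B))"
    unfolding spanned_def using fin by (intro card_mono) auto
  also have "\<dots> \<le> card (?A \<times> ?B)"
    by (rule card_image_le) (use fin in auto)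
  finally show ?thesis
    using card_AB by linarith
qed

lemma spanned_sumset_ge:
  assumes R: "R \<subseteq> zpm p m" and L: "\<And>r s. r \<in> R \<Longrightarrow> s \<in> R \<Longrightarrow> vadd p r s \<in> L"
  shows "card R ^ 2 \<le> spanned p m (Row ` R \<union> Col ` R \<union> Lab ` L)"
proof -
  have fin: "finite R"
    using finite_subset[OF R finite_zpm] .
  have inj: "inj_on (\<lambda>(r, s). face p r s) (R \<times> R)"
    by (auto simp: inj_on_def face_def)
  have "(\<lambda>(r, s). face p r s) ` (R \<times> R) \<subseteq> {f \<in> faces p m. f \<subseteq> Row ` R \<union> Col ` R \<union> Lab ` L}"
    using R L by (auto simp: faces_def face_def)
  then have "card ((\<lambda>(r, s). face p r s) ` (R \<times> R)) \<le> spanned p m (Row ` R \<union> Col ` R \<union> Lab ` L)"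
    unfolding spanned_def by (intro card_mono) (auto simp: finite_faces)
  then show ?thesis
    using card_image[OF inj] by (simp add: card_cartesian_product power2_eq_square)
qed

lemma card_sumset_vertices_le:
  assumes "finite R" "finite L"
  shows "card (Row ` R \<union> Col ` R \<union> Lab ` L) \<le> 2 * card R + card L"
proof -
  have "card (Row ` R \<union> Col ` R \<union> Lab ` L) \<le> card (Row ` R) + card (Col ` R) + card (Lab ` L)"
    using card_Un_le[of "Row ` R \<union> Col ` R" "Lab ` L"] card_Un_le[of "Row ` R" "Col ` R"]
    by linarith
  also have "\<dots> \<le> card R + card R + card L"
    by (intro add_mono card_image_le assms)
  finally show ?thesis
    by simp
qed

lemma exists_power_scale:
  fixes p v :: nat
  assumes "p \<ge> 2" "v \<ge> 3"
  shows "\<exists>k. 3 * p ^ k \<le> v \<and> v < 3 * p ^ Suc k"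
  using \<open>v \<ge> 3\<close>
proof (induction v rule: nat_induct_at_least)
  case base
  then show ?case
    using assms(1) by (intro exI[of _ 0]) auto
next
  case (Suc v)
  then obtain k where k: "3 * p ^ k \<le> v" "v < 3 * p ^ Suc k"
    by auto
  show ?case
  proof (cases "Suc v < 3 * p ^ Suc k")
    case True
    then show ?thesis
      using k by (intro exI[of _ k]) auto
  next
    case False
    then have "Suc v = 3 * p ^ Suc k"
      using k by auto
    moreover have "p ^ Suc k < p ^ Suc (Suc k)"
      using assms(1) by (intro power_strict_increasing) auto
    ultimately show ?thesis
      by (intro exI[of _ "Suc k"]) auto
  qed
qed

lemma box_parameters_exist:
  fixes p v :: nat
  assumes p: "p \<ge> 2" and v: "v \<ge> 3"
  obtains k a where "1 \<le> a" "a < p" "p ^ k * (4 * a - 1) \<le> v" "v \<le> 7 * (a * p ^ k)"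
proof -
  obtain k where k: "3 * p ^ k \<le> v" "v < 3 * p ^ Suc k"
    using exists_power_scale[OF p v] by blast
  define n where "n = p ^ k"
  define a where "a = (v + n) div (4 * n)"
  have n: "n > 0"
    using p by (simp add: n_def)
  have a_ub: "4 * (a * n) \<le> v + n"
    using div_times_less_eq_dividend[of "v + n" "4 * n"] by (simp add: a_def ac_simps)
  have a_lb: "v + n < 4 * n + 4 * (a * n)"
    using dividend_less_div_times[of "4 * n" "v + n"] n by (simp add: a_def ac_simps)
  have "a \<noteq> 0"
  proof
    assume "a = 0"
    then show False
      using a_lb k(1) by (simp add: n_def)
  qed
  then have a1: "n \<le> a * n"
    by simp
  have "a < p"
  proof (rule ccontr)
    assume "\<not> a < p"
    then have "p * n \<le> a * n"
      by simp
    moreover have "v < 3 * (p * n)" "2 * n \<le> p * n"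
      using k p by (simp_all add: n_def)
    ultimately show False
      using a_ub by linarith
  qed
  moreover have "n * (4 * a - 1) = 4 * (a * n) - n"
    by (simp add: right_diff_distrib' ac_simps)
  ultimately show ?thesis
    using that[of a k] \<open>a \<noteq> 0\<close> a_ub a_lb a1 unfolding n_def by linarith
qed

lemma le_power_if_le_exponent:
  fixes p :: nat
  assumes "p \<ge> 2" "v \<le> m"
  shows "v \<le> p ^ m"
proof -
  have "v < 2 ^ m"
    using assms(2) less_exp[of m] by linarith
  also have "\<dots> \<le> p ^ m"
    using assms(1) by (rule power_mono) simp
  finally show ?thesis
    by simp
qed

lemma exists_sum_closed_boxes:
  assumes p: "p \<ge> 2" and "a < p" "k < m"
  obtains R L where "R \<subseteq> zpm p m" "L \<subseteq> zpm p m" "card R = p ^ k * a"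
    "card L \<le> p ^ k * (2 * a - 1)" "\<And>r s. r \<in> R \<Longrightarrow> s \<in> R \<Longrightarrow> vadd p r s \<in> L"
proof
  define T where "T = (\<lambda>j. j mod p) ` {..<2 * a - 1}"
  define R where "R = box (Suc k) (\<lambda>i. if i < k then {..<p} else {..<a})"
  define L where "L = box (Suc k) (\<lambda>i. if i < k then {..<p} else T)"
  show "R \<subseteq> zpm p m" "L \<subseteq> zpm p m"
    unfolding R_def L_def using assms by (intro box_subset_zpm; auto simp: T_def)+
  show "card R = p ^ k * a"
    by (simp add: R_def card_box)
  have "card T \<le> 2 * a - 1"
    unfolding T_def using card_image_le by fastforce
  then show "card L \<le> p ^ k * (2 * a - 1)"
    by (simp add: L_def card_box)
  show "vadd p r s \<in> L" if "r \<in> R" "s \<in> R" for r s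
    unfolding L_def using that unfolding R_def
    by (rule vadd_in_box) (use p in \<open>auto simp: T_def\<close>)
qed

lemma exists_vertex_set_spanning_sumset:
  assumes R: "R \<subseteq> zpm p m" and L: "L \<subseteq> zpm p m"
    and sums: "\<And>r s. r \<in> R \<Longrightarrow> s \<in> R \<Longrightarrow> vadd p r s \<in> L"
    and "2 * card R + card L \<le> v" "v \<le> p ^ m"
  obtains S where "S \<subseteq> verts p m" "card S = v" "card R ^ 2 \<le> spanned p m S"
proof -
  define S0 where "S0 = Row ` R \<union> Col ` R \<union> Lab ` L"
  have S0: "S0 \<subseteq> verts p m"
    using R L by (auto simp: S0_def verts_def)
  have "card S0 \<le> v"
    using card_sumset_vertices_le[OF finite_subset[OF R finite_zpm] finite_subset[OF L finite_zpm]]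
      assms(4) unfolding S0_def by linarith
  moreover have "v \<le> card (verts p m)"
    using assms(5) card_verts_ge[of p m] by linarith
  ultimately obtain S where S: "S0 \<subseteq> S" "S \<subseteq> verts p m" "card S = v"
    using exists_subset_between[OF _ _ S0 finite_verts] by blast
  have "card R ^ 2 \<le> spanned p m S0"
    unfolding S0_def using R sums by (rule spanned_sumset_ge)
  also have "\<dots> \<le> spanned p m S"
    using S(1) by (rule spanned_mono)
  finally show ?thesis
    using S that by blast
qed

lemma exists_dense_vertex_set:
  assumes p: "p \<ge> 2" and v: "v \<ge> 3"
  shows "\<forall>\<^sub>F m in sequentially. \<exists>S. S \<subseteq> verts p m \<and> card S = v \<and> v ^ 2 \<le> 49 * spanned p m S"
proof -
  obtain k a where a: "1 \<le> a" "a < p" and small: "p ^ k * (4 * a - 1) \<le> v"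
    and dense: "v \<le> 7 * (a * p ^ k)"
    using box_parameters_exist[OF p v] .
  have "\<exists>S. S \<subseteq> verts p m \<and> card S = v \<and> v ^ 2 \<le> 49 * spanned p m S" if m: "m \<ge> max (Suc k) v" for m
  proof -
    obtain R L where RL: "R \<subseteq> zpm p m" "L \<subseteq> zpm p m" and card_R: "card R = p ^ k * a"
      and card_L: "card L \<le> p ^ k * (2 * a - 1)" and sums: "\<And>r s. r \<in> R \<Longrightarrow> s \<in> R \<Longrightarrow> vadd p r s \<in> L"
      using exists_sum_closed_boxes[OF p a(2), of k m] m by auto
    have "4 * a - 1 = 2 * a + (2 * a - 1)"
      using a(1) by simp
    then have "2 * card R + card L \<le> v"
      using card_R card_L small by (simp add: add_mult_distrib2)
    moreover have "v \<le> p ^ m"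
      using m p by (intro le_power_if_le_exponent) auto
    ultimately obtain S where S: "S \<subseteq> verts p m" "card S = v" "card R ^ 2 \<le> spanned p m S"
      using exists_vertex_set_spanning_sumset[OF RL sums] by blast
    have "v ^ 2 \<le> (7 * (a * p ^ k)) ^ 2"
      using dense by (rule power_mono) simp
    also have "\<dots> = 49 * card R ^ 2"
      by (simp add: card_R power_mult_distrib mult.commute)
    finally show ?thesis
      using S by (intro exI[of _ S]) simp
  qed
  then show ?thesis
    unfolding eventually_sequentially by blast
qed

lemma spanned_values_finite: "finite {spanned p m S | S. S \<subseteq> verts p m \<and> card S = v}"
proof (rule finite_subset)
  show "{spanned p m S | S. S \<subseteq> verts p m \<and> card S = v} \<subseteq> {..v ^ 2}"
  proof (safe, simp)
    fix S
    assume "S \<subseteq> verts p m"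
    then show "spanned p m S \<le> card S ^ 2"
      by (intro spanned_le_square finite_subset[OF _ finite_verts])
  qed
qed simp

lemma maxspan_ge: "S \<subseteq> verts p m \<Longrightarrow> card S = v \<Longrightarrow> spanned p m S \<le> maxspan p m v"
  unfolding maxspan_def using spanned_values_finite by (intro Max_ge) auto

lemma maxspan_attained:
  assumes "v \<le> p ^ m"
  obtains S where "S \<subseteq> verts p m" "card S = v" "maxspan p m v = spanned p m S"
proof -
  have "v \<le> card (verts p m)"
    using assms card_verts_ge[of p m] by linarith
  then obtain S where "S \<subseteq> verts p m" "card S = v"
    by (rule obtain_subset_with_card_n)
  then have "maxspan p m v \<in> {spanned p m S | S. S \<subseteq> verts p m \<and> card S = v}"
    unfolding maxspan_def by (intro Max_in spanned_values_finite) auto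
  then show ?thesis
    using that by blast
qed

lemma maxspan_le_square:
  assumes "v \<le> p ^ m"
  shows "maxspan p m v \<le> v ^ 2"
proof -
  obtain S where "S \<subseteq> verts p m" "card S = v" "maxspan p m v = spanned p m S"
    using maxspan_attained[OF assms] .
  then show ?thesis
    using spanned_le_square[OF finite_subset[OF _ finite_verts]] by metis
qed

lemma maxspan_mono_dim:
  assumes "p > 0" "v \<le> p ^ m"
  shows "maxspan p m v \<le> maxspan p (Suc m) v"
proof -
  obtain S where S: "S \<subseteq> verts p m" "card S = v" "maxspan p m v = spanned p m S"
    using maxspan_attained[OF assms(2)] .
  have "spanned p m S \<le> spanned p (Suc m) S"
    using assms(1) by (rule spanned_mono_dim)
  also have "\<dots> \<le> maxspan p (Suc m) v"
    using S verts_mono[OF assms(1), of m] by (intro maxspan_ge) auto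
  finally show ?thesis
    using S by simp
qed

lemma eventually_constant_if_mono_bounded:
  fixes f :: "nat \<Rightarrow> nat"
  assumes mono: "\<And>m. m \<ge> N \<Longrightarrow> f m \<le> f (Suc m)" and bounded: "\<And>m. m \<ge> N \<Longrightarrow> f m \<le> B"
  shows "\<exists>c. \<forall>\<^sub>F m in sequentially. f m = c"
proof -
  have "f ` {N..} \<subseteq> {..B}"
    using bounded by auto
  then have fin: "finite (f ` {N..})"
    by (rule finite_subset) simp
  have "Max (f ` {N..}) \<in> f ` {N..}"
    using fin by (rule Max_in) simp
  then obtain j where j: "j \<ge> N" "f j = Max (f ` {N..})"
    by (metis atLeast_iff imageE)
  have "f m = f j" if "m \<ge> j" for m
  proof (rule antisym)
    show "f m \<le> f j"
      unfolding j(2) using fin j(1) that by (intro Max_ge) auto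
    show "f j \<le> f m"
      using that
    proof (induction m rule: dec_induct)
      case (step n)
      then show ?case
        using mono[of n] j(1) by linarith
    qed simp
  qed
  then show ?thesis
    unfolding eventually_sequentially by blast
qed

lemma the_eventual_value:
  assumes "F \<noteq> bot" "\<forall>\<^sub>F x in F. f x = c"
  shows "(THE c. \<forall>\<^sub>F x in F. f x = c) = c"
proof (rule the_equality)
  fix d
  assume "\<forall>\<^sub>F x in F. f x = d"
  with assms(2) have "\<forall>\<^sub>F x in F. d = c"
    by (rule eventually_elim2) simp
  with assms(1) show "d = c"
    by (simp add: eventually_const_iff)
qed (fact assms(2))

lemma eventually_maxspan_eq_gp':
  assumes "p \<ge> 2"
  shows "\<forall>\<^sub>F m in sequentially. maxspan p m v = gp' p v"
proof -
  have v_le: "v \<le> p ^ m" if "m \<ge> v" for m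
    using assms that by (rule le_power_if_le_exponent)
  have "p > 0"
    using assms by simp
  then obtain c where c: "\<forall>\<^sub>F m in sequentially. maxspan p m v = c"
    using eventually_constant_if_mono_bounded[of v "\<lambda>m. maxspan p m v" "v ^ 2"]
      maxspan_mono_dim[OF _ v_le] maxspan_le_square[OF v_le] by blast
  then have "gp' p v = c"
    unfolding gp'_def by (intro the_eventual_value) simp_all
  then show ?thesis
    using c by simp
qed

lemma gp'_ge:
  assumes "p \<ge> 2" "v \<ge> 3"
  shows "v ^ 2 \<le> 49 * gp' p v"
proof -
  have "\<forall>\<^sub>F m in sequentially. maxspan p m v = gp' p v \<and>
      (\<exists>S. S \<subseteq> verts p m \<and> card S = v \<and> v ^ 2 \<le> 49 * spanned p m S)"
    using eventually_maxspan_eq_gp' exists_dense_vertex_set assms by (intro eventually_conj)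
  then obtain m S where "maxspan p m v = gp' p v" "S \<subseteq> verts p m" "card S = v"
    "v ^ 2 \<le> 49 * spanned p m S"
    unfolding eventually_sequentially by blast
  then show ?thesis
    using maxspan_ge[of S p m v] by linarith
qed

lemma gp_le:
  assumes "p \<ge> 2" "v \<ge> 3" "49 * t \<le> v ^ 2"
  shows "gp p t \<le> v"
  unfolding gp_def
proof (rule Least_le)
  show "\<forall>\<^sub>F m in sequentially. has_config p m v t"
    using exists_dense_vertex_set[OF assms(1,2)]
  proof (rule eventually_mono)
    fix m
    assume "\<exists>S. S \<subseteq> verts p m \<and> card S = v \<and> v ^ 2 \<le> 49 * spanned p m S"
    then obtain S where S: "S \<subseteq> verts p m" "card S = v" "v ^ 2 \<le> 49 * spanned p m S"
      by blast
    then have "t \<le> card {f \<in> faces p m. f \<subseteq> S}"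
      using assms(3) unfolding spanned_def by linarith
    then obtain F where F: "F \<subseteq> {f \<in> faces p m. f \<subseteq> S}" "card F = t"
      by (rule obtain_subset_with_card_n)
    then have "card (\<Union>F) \<le> card S"
      using finite_subset[OF S(1) finite_verts] by (intro card_mono) auto
    then show "has_config p m v t"
      unfolding has_config_def using F S(2) by blast
  qed
qed

lemma eventually_le_sqrt_if_square_bound:
  fixes g :: "nat \<Rightarrow> nat" and c :: nat and \<epsilon> :: real
  assumes bound: "\<And>v t. v \<ge> N \<Longrightarrow> c ^ 2 * t \<le> v ^ 2 \<Longrightarrow> g t \<le> v"
    and "c > 0" "\<epsilon> > 0"
  shows "\<forall>\<^sub>F t in sequentially. real (g t) \<le> (c + \<epsilon>) * sqrt (real t)"
proof -
  have "\<forall>\<^sub>F t in sequentially. N \<le> c * sqrt (real t)"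
    using \<open>c > 0\<close> by real_asymp
  moreover have "\<forall>\<^sub>F t in sequentially. 1 \<le> \<epsilon> * sqrt (real t)"
    using \<open>\<epsilon> > 0\<close> by real_asymp
  ultimately have "\<forall>\<^sub>F t in sequentially. N \<le> c * sqrt (real t) \<and> 1 \<le> \<epsilon> * sqrt (real t)"
    by (rule eventually_conj)
  then show ?thesis
  proof (rule eventually_mono)
    fix t
    assume t: "N \<le> c * sqrt (real t) \<and> 1 \<le> \<epsilon> * sqrt (real t)"
    define v where "v = nat \<lceil>c * sqrt (real t)\<rceil>"
    have "real v = of_int \<lceil>c * sqrt (real t)\<rceil>"
      unfolding v_def by simp
    then have v: "c * sqrt (real t) \<le> real v" "real v \<le> c * sqrt (real t) + 1"
      using ceiling_correct[of "c * sqrt (real t)"] by linarith+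
    have "real (c ^ 2 * t) = (c * sqrt (real t)) ^ 2"
      by (simp add: power_mult_distrib)
    also have "\<dots> \<le> real (v ^ 2)"
      using v(1) by (simp only: of_nat_power) (intro power_mono, auto)
    finally have "c ^ 2 * t \<le> v ^ 2"
      by (simp only: of_nat_le_iff)
    then have "g t \<le> v"
      using t v(1) by (intro bound) linarith+
    then show "real (g t) \<le> (c + \<epsilon>) * sqrt (real t)"
      using t v(2) by (simp add: algebra_simps)
  qed
qed

theorem proposition2:
  fixes p :: nat
  assumes "prime p"
  shows "(\<forall>\<epsilon>>0. \<forall>\<^sub>F v in sequentially. real (gp' p v) \<ge> (1 - \<epsilon>) * real v ^ 2 / 49)
       \<and> (\<forall>\<epsilon>>0. \<forall>\<^sub>F t in sequentially. real (gp p t) \<le> (7 + \<epsilon>) * sqrt (real t))"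
proof (intro conjI allI impI)
  have p: "p \<ge> 2"
    using assms prime_ge_2_nat by blast
  fix \<epsilon> :: real
  assume "\<epsilon> > 0"
  have "(1 - \<epsilon>) * real v ^ 2 / 49 \<le> real (gp' p v)" if "v \<ge> 3" for v
  proof -
    have "(1 - \<epsilon>) * real v ^ 2 \<le> real v ^ 2"
      using \<open>\<epsilon> > 0\<close> by (simp add: algebra_simps)
    also have "\<dots> \<le> 49 * real (gp' p v)"
      using gp'_ge[OF p that] by (simp flip: of_nat_power)
    finally show ?thesis
      by simp
  qed
  then show "\<forall>\<^sub>F v in sequentially. real (gp' p v) \<ge> (1 - \<epsilon>) * real v ^ 2 / 49"
    unfolding eventually_sequentially by blast
  show "\<forall>\<^sub>F t in sequentially. real (gp p t) \<le> (7 + \<epsilon>) * sqrt (real t)"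
    using eventually_le_sqrt_if_square_bound[of 3 7 "gp p" \<epsilon>] gp_le[OF p] \<open>\<epsilon> > 0\<close> by simp
qed

end
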